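(* Let $a_n=b_n$ under Case I (with (H-I) and (C-L($b_n$))) and $a_n=\lambda_n$ under Case II (with (H-II) and (C-L($\lambda_n$))). Then for every $\delta>0$, $$\lim_{n\to\infty}\frac1{a_n^2}\log P\Big(\frac{|M_n|}{n}>\delta\Big)=-\infty,\quad \lim_{n\to\infty}\frac1{a_n^2}\log P\Big(\frac{|N_n|}{n}>\delta\Big)=-\infty,\quad \lim_{n\to\infty}\frac1{a_n^2}\log P\Big(\frac{|U_n|}{n}>\delta\Big)=-\infty.$$
   Context: Model: for each $n\ge1$, $X_{k,n}=\theta_nX_{k-1,n}+\varepsilon_{k,n}$, $\varepsilon_{k,n}=\rho_n\varepsilon_{k-1,n}+V_k$ for $k=1,\dots,n$, with $X_{0,n}=\varepsilon_{0,n}=0$. Here $(V_k)_{k\ge1}$ are i.i.d. real random variables with $E V_1=0$, $EV_1^2=\sigma^2\in(0,\infty)$, and $E\exp(t_0V_1^2)<\infty$ for some $t_0>0$. $(\kappa_n)$ is a sequence of positive numbers with $\kappa_n\to\infty$, and $\gamma_1<0,\gamma_2<0$ are constants. Case I: $\theta_n=1+\gamma_1/\kappa_n$, $\rho_n=1+\gamma_2/\kappa_n$. Case II: $\theta_n=1+\gamma_1/\kappa_n$, $\rho_n=-1-\gamma_2/\kappa_n$. (H-I): $(b_n)$ is an increasing sequence of positive numbers with $b_n\to\infty$, $\frac{n}{b_n^6\kappa_n^2}\to\infty$, $\frac{n}{b_n^2\kappa_n^5}\to\infty$, $\frac{nb_n^2}{\kappa_n^5\log^2n}\to\infty$. (H-II):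 $(\lambda_n)$ is an increasing sequence of positive numbers with $\lambda_n\to\infty$, $\frac{n}{\lambda_n^6\kappa_n^6}\to\infty$, $\frac{n}{\lambda_n^2\kappa_n^{11}}\to\infty$, $\frac{n\lambda_n^2}{\kappa_n^7\log^2n}\to\infty$. (C-L($a_n$)): $\frac{1}{a_n^2}\log\big(nP(|V_1|^4>a_n\sqrt n)\big)\to-\infty$. Martingales: $M_n=\sum_{k=1}^nX_{k-1,n}V_k$, $N_n=\sum_{k=2}^nX_{k-2,n}V_k$, $U_n=\sum_{k=1}^n\varepsilon_{k-1,n}V_k$. *)

theory Defs
  imports "HOL-Probability.Probability"
begin

fun eps_proc :: "real \<Rightarrow> (nat \<Rightarrow> 'a \<Rightarrow> real) \<Rightarrow> nat \<Rightarrow> 'a \<Rightarrow> real" where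
  "eps_proc \<rho> V 0 \<omega> = 0"
| "eps_proc \<rho> V (Suc k) \<omega> = \<rho> * eps_proc \<rho> V k \<omega> + V (Suc k) \<omega>"

fun X_proc :: "real \<Rightarrow> real \<Rightarrow> (nat \<Rightarrow> 'a \<Rightarrow> real) \<Rightarrow> nat \<Rightarrow> 'a \<Rightarrow> real" where
  "X_proc \<theta> \<rho> V 0 \<omega> = 0"
| "X_proc \<theta> \<rho> V (Suc k) \<omega> = \<theta> * X_proc \<theta> \<rho> V k \<omega> + eps_proc \<rho> V (Suc k) \<omega>"

definition M_mart :: "real \<Rightarrow> real \<Rightarrow> (nat \<Rightarrow> 'a \<Rightarrow> real) \<Rightarrow> nat \<Rightarrow> 'a \<Rightarrow> real" where
  "M_mart \<theta> \<rho> V n \<omega> = (\<Sum>k=1..n. X_proc \<theta> \<rho> V (k - 1) \<omega> * V k \<omega>)"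

definition N_mart :: "real \<Rightarrow> real \<Rightarrow> (nat \<Rightarrow> 'a \<Rightarrow> real) \<Rightarrow> nat \<Rightarrow> 'a \<Rightarrow> real" where
  "N_mart \<theta> \<rho> V n \<omega> = (\<Sum>k=2..n. X_proc \<theta> \<rho> V (k - 2) \<omega> * V k \<omega>)"

definition U_mart :: "real \<Rightarrow> (nat \<Rightarrow> 'a \<Rightarrow> real) \<Rightarrow> nat \<Rightarrow> 'a \<Rightarrow> real" where
  "U_mart \<rho> V n \<omega> = (\<Sum>k=1..n. eps_proc \<rho> V (k - 1) \<omega> * V k \<omega>)"

definition ext_ln :: "real \<Rightarrow> ereal" where
  "ext_ln x = (if x \<le> 0 then -\<infinity> else ereal (ln x))"

end

theory Submission
  imports Defs
begin

text \<open>Each of \<open>M\<^sub>n\<close>, \<open>N\<^sub>n\<close>, \<open>U\<^sub>n\<close> is a martingale transform \<open>\<Sum>\<^sub>k Y\<^sub>k V\<^sub>k\<close> whose predictable factor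
  \<open>Y\<^sub>k = \<Sum>\<^sub>j\<^sub><\<^sub>k w\<^sub>k\<^sub>j V\<^sub>j\<close> is the autoregressive filter applied to the past; \<open>U\<^sub>n\<close> is \<open>M\<^sub>n\<close> with
  \<open>\<theta> = 0\<close>. The exponential square moment makes \<open>V\<^sub>1\<close> sub-Gaussian with some constant \<open>C\<close>, so
  \<open>exp (l \<Sum> Y\<^sub>k V\<^sub>k - C l\<^sup>2 \<Sum> Y\<^sub>k\<^sup>2)\<close> has mean at most 1. With \<open>g = min (-\<gamma>\<^sub>1) (-\<gamma>\<^sub>2)\<close> and
  \<open>r\<^sub>n = g / \<kappa>\<^sub>n\<close>, eventually \<open>\<bar>\<theta>\<^sub>n\<bar>, \<bar>\<rho>\<^sub>n\<bar> \<le> 1 - r\<^sub>n\<close>, so the impulse response of the filter has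
  \<open>\<ell>\<^sup>1\<close>-norm at most \<open>r\<^sub>n\<^sup>-\<^sup>2\<close> and Young's inequality gives \<open>\<Sum> Y\<^sub>k\<^sup>2 \<le> r\<^sub>n\<^sup>-\<^sup>4 \<Sum> V\<^sub>j\<^sup>2\<close>. Off the
  event \<open>\<Sum> V\<^sub>j\<^sup>2 > K n\<close>, of probability at most \<open>e\<^sup>-\<^sup>n\<close>, a Chernoff bound with optimised \<open>l\<close>
  yields \<open>P (\<bar>\<Sum> Y\<^sub>k V\<^sub>k\<bar> > n \<delta>) \<le> 3 exp (-c n r\<^sub>n\<^sup>4)\<close>, and \<open>n r\<^sub>n\<^sup>4 / a\<^sub>n\<^sup>2 \<rightarrow> \<infinity>\<close> under both
  sets of hypotheses.\<close>

section \<open>Sub-Gaussian variables\<close>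

definition subgaussian :: "'a measure \<Rightarrow> ('a \<Rightarrow> real) \<Rightarrow> real \<Rightarrow> bool" where
  "subgaussian M X C \<longleftrightarrow>
     (\<forall>s. integrable M (\<lambda>\<omega>. exp (s * X \<omega>)) \<and> (\<integral>\<omega>. exp (s * X \<omega>) \<partial>M) \<le> exp (C * s\<^sup>2))"

lemma exp_le_1_plus_sq_exp_abs: "exp (y::real) \<le> 1 + y + y\<^sup>2 * exp \<bar>y\<bar>"
proof -
  obtain t where t: "\<bar>t\<bar> \<le> \<bar>y\<bar>" "exp y = (\<Sum>m<2. y ^ m / fact m) + exp t / fact 2 * y ^ 2"
    using Maclaurin_exp_le[of y 2] by blast
  have "exp t \<le> exp \<bar>y\<bar>" using t(1) by simp
  then have "exp t / 2 \<le> exp \<bar>y\<bar>" using exp_gt_zero[of t] by linarith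
  then have "exp t / 2 * y\<^sup>2 \<le> y\<^sup>2 * exp \<bar>y\<bar>"
    by (metis mult.commute mult_right_mono zero_le_power2)
  with t(2) show ?thesis by (simp add: eval_nat_numeral)
qed

lemma mult_le_sq_plus_sq_div:
  fixes s v t :: real assumes "t > 0" shows "s * v \<le> t * v\<^sup>2 + s\<^sup>2 / (4 * t)"
proof -
  have "0 \<le> (2 * t * v - s)\<^sup>2" by simp
  then have "4 * t * (s * v) \<le> 4 * t * (t * v\<^sup>2 + s\<^sup>2 / (4 * t))"
    using assms by (simp add: power2_eq_square algebra_simps)
  then show ?thesis using assms by simp
qed

lemma sq_mult_exp_abs_le:
  fixes v t :: real assumes t: "t > 0"
  shows "v\<^sup>2 * exp \<bar>v\<bar> \<le> 2 / t * exp (1 / (2 * t)) * exp (t * v\<^sup>2)"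
proof -
  have sq: "v\<^sup>2 \<le> 2 / t * exp (t * v\<^sup>2 / 2)"
    using exp_ge_add_one_self[of "t * v\<^sup>2 / 2"] t by (simp add: field_simps)
  have "\<bar>v\<bar> \<le> t * \<bar>v\<bar>\<^sup>2 / 2 + 1 / (2 * t)"
    using mult_le_sq_plus_sq_div[of "t / 2" 1 "\<bar>v\<bar>"] t by (simp add: field_simps)
  then have abs: "\<bar>v\<bar> \<le> t * v\<^sup>2 / 2 + 1 / (2 * t)" by simp
  have "v\<^sup>2 * exp \<bar>v\<bar> \<le> 2 / t * exp (t * v\<^sup>2 / 2) * exp (t * v\<^sup>2 / 2 + 1 / (2 * t))"
    using sq abs t by (intro mult_mono) auto
  also have "\<dots> = 2 / t * exp (1 / (2 * t)) * exp (t * v\<^sup>2)"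
    by (simp add: exp_add[symmetric] mult.assoc)
  finally show ?thesis .
qed

lemma exp_mult_le_exp_sq_div:
  fixes s v t :: real assumes "t > 0" shows "exp (s * v) \<le> exp (s\<^sup>2 / (4 * t)) * exp (t * v\<^sup>2)"
  using mult_le_sq_plus_sq_div[OF assms, of s v] by (simp add: exp_add[symmetric])

lemma exp_mult_le_quadratic_of_abs_le_1:
  fixes s v t :: real assumes t: "t > 0" and s: "\<bar>s\<bar> \<le> 1"
  shows "exp (s * v) \<le> 1 + s * v + s\<^sup>2 * (2 / t * exp (1 / (2 * t))) * exp (t * v\<^sup>2)"
proof -
  have "\<bar>s * v\<bar> \<le> \<bar>v\<bar>" using s by (simp add: abs_mult mult_left_le_one_le)
  then have "(s * v)\<^sup>2 * exp \<bar>s * v\<bar> \<le> s\<^sup>2 * (v\<^sup>2 * exp \<bar>v\<bar>)"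
    by (simp add: power_mult_distrib mult.assoc mult_left_mono)
  also have "\<dots> \<le> s\<^sup>2 * (2 / t * exp (1 / (2 * t)) * exp (t * v\<^sup>2))"
    using sq_mult_exp_abs_le[OF t] by (intro mult_left_mono) auto
  finally show ?thesis using exp_le_1_plus_sq_exp_abs[of "s * v"] by (simp add: mult.assoc)
qed

text \<open>An exponential square moment makes a centred variable sub-Gaussian: for \<open>\<bar>s\<bar> \<le> 1\<close>
  use the second-order Taylor bound, for \<open>\<bar>s\<bar> > 1\<close> the bound \<open>s v \<le> t v\<^sup>2 + s\<^sup>2/(4t)\<close>.\<close>

lemma (in prob_space) subgaussian_of_integrable_exp_sq:
  fixes X :: "'a \<Rightarrow> real"
  assumes X: "integrable M X" and centred: "expectation X = 0"
    and t: "t > 0" and exp_sq: "integrable M (\<lambda>\<omega>. exp (t * (X \<omega>)\<^sup>2))"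
  shows "\<exists>C>0. subgaussian M X C"
proof -
  define m where "m = expectation (\<lambda>\<omega>. exp (t * (X \<omega>)\<^sup>2))"
  have "expectation (\<lambda>_. 1::real) \<le> m"
    unfolding m_def using t by (intro integral_mono exp_sq) auto
  then have m: "1 \<le> m" by (simp add: prob_space)
  define A where "A = 2 / t * exp (1 / (2 * t))"
  define C where "C = max (A * m) (1 / (4 * t) + ln m)"
  have "0 < A * m" using t m by (simp add: A_def)
  then have "C > 0" unfolding C_def by (rule less_le_trans[OF _ max.cobounded1])
  moreover have "subgaussian M X C"
    unfolding subgaussian_def
  proof (intro allI conjI)
    fix s :: real
    have bound: "integrable M (\<lambda>\<omega>. exp (s\<^sup>2 / (4 * t)) * exp (t * (X \<omega>)\<^sup>2))"
      using exp_sq by simp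
    show int: "integrable M (\<lambda>\<omega>. exp (s * X \<omega>))"
      by (rule Bochner_Integration.integrable_bound[OF bound])
         (use X exp_mult_le_exp_sq_div[OF t] in \<open>auto\<close>)
    show "expectation (\<lambda>\<omega>. exp (s * X \<omega>)) \<le> exp (C * s\<^sup>2)"
    proof (cases "\<bar>s\<bar> \<le> 1")
      case True
      have "expectation (\<lambda>\<omega>. exp (s * X \<omega>))
          \<le> expectation (\<lambda>\<omega>. 1 + s * X \<omega> + s\<^sup>2 * A * exp (t * (X \<omega>)\<^sup>2))"
        using exp_mult_le_quadratic_of_abs_le_1[OF t True] unfolding A_def
        by (intro integral_mono int Bochner_Integration.integrable_add integrable_mult_right X exp_sq)
           auto
      also have "\<dots> = 1 + s\<^sup>2 * A * m"
        using X exp_sq centred by (simp add: m_def prob_space)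
      also have "\<dots> \<le> exp (s\<^sup>2 * A * m)" by (rule exp_ge_add_one_self)
      also have "\<dots> \<le> exp (C * s\<^sup>2)"
      proof -
        have "A * m * s\<^sup>2 \<le> C * s\<^sup>2" unfolding C_def by (intro mult_right_mono) auto
        then show ?thesis by (simp add: mult_ac)
      qed
      finally show ?thesis .
    next
      case False
      then have s: "1 \<le> s\<^sup>2" using abs_le_square_iff[of 1 s] by simp
      have "expectation (\<lambda>\<omega>. exp (s * X \<omega>))
          \<le> expectation (\<lambda>\<omega>. exp (s\<^sup>2 / (4 * t)) * exp (t * (X \<omega>)\<^sup>2))"
        using exp_mult_le_exp_sq_div[OF t] by (intro integral_mono int bound)
      also have "\<dots> = exp (s\<^sup>2 / (4 * t) + ln m)"
        using m by (simp add: m_def exp_add)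
      also have "\<dots> \<le> exp (C * s\<^sup>2)"
      proof -
        have "ln m \<le> s\<^sup>2 * ln m" using s m by (simp add: mult_le_cancel_right1)
        then have "s\<^sup>2 / (4 * t) + ln m \<le> (1 / (4 * t) + ln m) * s\<^sup>2"
          by (simp add: algebra_simps)
        also have "\<dots> \<le> C * s\<^sup>2" unfolding C_def by (intro mult_right_mono) auto
        finally show ?thesis by simp
      qed
      finally show ?thesis .
    qed
  qed
  ultimately show ?thesis by blast
qed

section \<open>Products of adapted functionals of independent variables\<close>

lemma (in prob_space) nn_integral_indep_var_mult_le:
  assumes XY: "indep_var S X T Y"
    and G: "G \<in> borel_measurable S"
    and f: "(\<lambda>z. f (fst z) (snd z)) \<in> borel_measurable (S \<Otimes>\<^sub>M T)"
    and bound: "\<And>x. x \<in> space S \<Longrightarrow> (\<integral>\<^sup>+ \<omega>. f x (Y \<omega>) \<partial>M) \<le> b"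
  shows "(\<integral>\<^sup>+ \<omega>. G (X \<omega>) * f (X \<omega>) (Y \<omega>) \<partial>M) \<le> (\<integral>\<^sup>+ \<omega>. G (X \<omega>) \<partial>M) * b"
proof -
  have X: "random_variable S X" and Y: "random_variable T Y"
    and joint: "distr M S X \<Otimes>\<^sub>M distr M T Y = distr M (S \<Otimes>\<^sub>M T) (\<lambda>\<omega>. (X \<omega>, Y \<omega>))"
    using XY by (simp_all add: indep_var_distribution_eq)
  interpret PY: prob_space "distr M T Y" by (rule prob_space_distr) (rule Y)
  have fx: "f x \<in> borel_measurable T" if "x \<in> space S" for x
    using measurable_Pair2[OF f that] by simp
  have Gf: "(\<lambda>z. G (fst z) * f (fst z) (snd z)) \<in> borel_measurable (S \<Otimes>\<^sub>M T)"
    by (intro borel_measurable_times_ennreal measurable_compose[OF measurable_fst G] f)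
  then have Gf': "(\<lambda>z. G (fst z) * f (fst z) (snd z)) \<in> borel_measurable (distr M S X \<Otimes>\<^sub>M distr M T Y)"
    by (simp only: measurable_cong_sets[OF sets_pair_measure_cong[OF sets_distr sets_distr] refl])
  have "(\<integral>\<^sup>+ \<omega>. G (X \<omega>) * f (X \<omega>) (Y \<omega>) \<partial>M)
      = (\<integral>\<^sup>+ z. G (fst z) * f (fst z) (snd z) \<partial>distr M (S \<Otimes>\<^sub>M T) (\<lambda>\<omega>. (X \<omega>, Y \<omega>)))"
    using Gf X Y by (simp add: nn_integral_distr)
  also have "\<dots> = (\<integral>\<^sup>+ x. \<integral>\<^sup>+ y. G x * f x y \<partial>distr M T Y \<partial>distr M S X)"
    using PY.nn_integral_fst[OF Gf'] by (simp add: joint)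
  also have "\<dots> = (\<integral>\<^sup>+ x. G x * \<integral>\<^sup>+ y. f x y \<partial>distr M T Y \<partial>distr M S X)"
    using fx by (intro nn_integral_cong nn_integral_cmult) auto
  also have "\<dots> \<le> (\<integral>\<^sup>+ x. G x * b \<partial>distr M S X)"
    using fx bound Y by (intro nn_integral_mono mult_left_mono) (auto simp: nn_integral_distr)
  also have "\<dots> = (\<integral>\<^sup>+ \<omega>. G (X \<omega>) \<partial>M) * b"
    using G X by (simp add: nn_integral_multc nn_integral_distr)
  finally show ?thesis .
qed

text \<open>The hypothesis bounds each factor's conditional expectation given \<open>V\<^sub>1, \<dots>, V\<^sub>k\<^sub>-\<^sub>1\<close>;
  independence of the past and \<open>V\<^sub>k\<close> peels the factors off one time step at a time.\<close>

lemma (in prob_space) nn_integral_prod_adapted_le: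
  fixes V :: "nat \<Rightarrow> 'a \<Rightarrow> real" and f :: "nat \<Rightarrow> (nat \<Rightarrow> real) \<Rightarrow> real \<Rightarrow> ennreal"
  assumes indep: "indep_vars (\<lambda>_. borel) V {1..}"
    and f: "\<And>k. (\<lambda>z. f k (fst z) (snd z)) \<in> borel_measurable (PiM {1..<k} (\<lambda>_. borel) \<Otimes>\<^sub>M borel)"
    and bound: "\<And>k x. k \<ge> 1 \<Longrightarrow> x \<in> space (PiM {1..<k} (\<lambda>_. borel)) \<Longrightarrow>
                  (\<integral>\<^sup>+ \<omega>. f k x (V k \<omega>) \<partial>M) \<le> b k"
  shows "(\<integral>\<^sup>+ \<omega>. (\<Prod>k\<in>{1..n}. f k (restrict (\<lambda>i. V i \<omega>) {1..<k}) (V k \<omega>)) \<partial>M)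
           \<le> (\<Prod>k\<in>{1..n}. b k)"
proof (induction n)
  case 0
  show ?case by (simp add: emeasure_space_1)
next
  case (Suc n)
  define S where "S = PiM {1..<Suc n} (\<lambda>_. borel :: real measure)"
  define past where "past = (\<lambda>\<omega>. restrict (\<lambda>i. V i \<omega>) {1..<Suc n})"
  define G where "G = (\<lambda>x. \<Prod>k\<in>{1..n}. f k (restrict x {1..<k}) (x k))"
  define T where "T = PiM {Suc n} (\<lambda>_. borel :: real measure)"
  define now where "now = (\<lambda>\<omega>. restrict (\<lambda>i. V i \<omega>) {Suc n})"
  have indep_past: "indep_var S past T now"
    unfolding S_def past_def T_def now_def by (rule indep_var_restrict[OF indep]) auto
  have now: "(\<lambda>q. q (Suc n)) \<in> borel_measurable T"
    unfolding T_def by (rule measurable_component_singleton) simp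
  have G: "G \<in> borel_measurable S"
    unfolding G_def
  proof (intro borel_measurable_prod_ennreal)
    fix k assume k: "k \<in> {1..n}"
    have "(\<lambda>x. (restrict x {1..<k}, x k)) \<in> measurable S (PiM {1..<k} (\<lambda>_. borel) \<Otimes>\<^sub>M borel)"
      unfolding S_def using k
      by (intro measurable_Pair measurable_restrict_subset measurable_component_singleton) auto
    from measurable_comp[OF this f[of k]]
    show "(\<lambda>x. f k (restrict x {1..<k}) (x k)) \<in> borel_measurable S" by (simp add: comp_def)
  qed
  have G_past: "G (past \<omega>) = (\<Prod>k\<in>{1..n}. f k (restrict (\<lambda>i. V i \<omega>) {1..<k}) (V k \<omega>))" for \<omega>
    unfolding G_def past_def
    by (intro prod.cong refl) (auto simp: restrict_def fun_eq_iff intro!: arg_cong2[where f="f _"])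
  have "(\<integral>\<^sup>+ \<omega>. (\<Prod>k\<in>{1..Suc n}. f k (restrict (\<lambda>i. V i \<omega>) {1..<k}) (V k \<omega>)) \<partial>M)
      = (\<integral>\<^sup>+ \<omega>. G (past \<omega>) * f (Suc n) (past \<omega>) (now \<omega> (Suc n)) \<partial>M)"
    by (simp add: G_past prod.cl_ivl_Suc now_def) (simp add: past_def)
  also have "\<dots> \<le> (\<integral>\<^sup>+ \<omega>. G (past \<omega>) \<partial>M) * b (Suc n)"
  proof (rule nn_integral_indep_var_mult_le[OF indep_past G,
        where f="\<lambda>x q. f (Suc n) x (q (Suc n))"])
    have "(\<lambda>z. (fst z, snd z (Suc n))) \<in> measurable (S \<Otimes>\<^sub>M T) (S \<Otimes>\<^sub>M borel)"
      by (intro measurable_Pair measurable_fst measurable_compose[OF measurable_snd now])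
    from measurable_comp[OF this f[of "Suc n", folded S_def]]
    show "(\<lambda>z. f (Suc n) (fst z) (snd z (Suc n))) \<in> borel_measurable (S \<Otimes>\<^sub>M T)"
      by (simp add: comp_def)
    show "(\<integral>\<^sup>+ \<omega>. f (Suc n) x (now \<omega> (Suc n)) \<partial>M) \<le> b (Suc n)" if "x \<in> space S" for x
      using bound[of "Suc n" x] that by (simp add: S_def now_def)
  qed
  also have "\<dots> \<le> (\<Prod>k\<in>{1..n}. b k) * b (Suc n)"
    unfolding G_past by (rule mult_right_mono[OF Suc.IH]) simp
  also have "\<dots> = (\<Prod>k\<in>{1..Suc n}. b k)" by (simp add: prod.cl_ivl_Suc)
  finally show ?case .
qed

lemma nn_integral_comp_eq_of_distr_eq:
  assumes "X \<in> borel_measurable M" "Y \<in> borel_measurable M"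
    and "distr M borel X = distr M borel Y" and "h \<in> borel_measurable borel"
  shows "(\<integral>\<^sup>+ \<omega>. h (X \<omega>) \<partial>M) = (\<integral>\<^sup>+ \<omega>. h (Y \<omega>) \<partial>M)"
proof -
  have "(\<integral>\<^sup>+ \<omega>. h (X \<omega>) \<partial>M) = integral\<^sup>N (distr M borel X) h"
    using assms(1,4) by (simp add: nn_integral_distr)
  also have "\<dots> = integral\<^sup>N (distr M borel Y) h" by (simp only: assms(3))
  also have "\<dots> = (\<integral>\<^sup>+ \<omega>. h (Y \<omega>) \<partial>M)"
    using assms(2,4) by (simp add: nn_integral_distr)
  finally show ?thesis .
qed

section \<open>Tail bounds for martingale transforms\<close>

lemma (in prob_space) nn_integral_exp_subgaussian_le_1:
  assumes "subgaussian M X C"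
  shows "(\<integral>\<^sup>+ \<omega>. ennreal (exp (s * X \<omega> - C * s\<^sup>2)) \<partial>M) \<le> 1"
proof -
  have int: "integrable M (\<lambda>\<omega>. exp (s * X \<omega>))" and mgf: "expectation (\<lambda>\<omega>. exp (s * X \<omega>)) \<le> exp (C * s\<^sup>2)"
    using assms by (auto simp: subgaussian_def)
  have "(\<integral>\<^sup>+ \<omega>. ennreal (exp (s * X \<omega> - C * s\<^sup>2)) \<partial>M)
      = (\<integral>\<^sup>+ \<omega>. ennreal (exp (- (C * s\<^sup>2)) * exp (s * X \<omega>)) \<partial>M)"
    by (simp add: exp_add[symmetric])
  also have "\<dots> = ennreal (exp (- (C * s\<^sup>2)) * expectation (\<lambda>\<omega>. exp (s * X \<omega>)))"
    using int by (subst nn_integral_eq_integral) auto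
  also have "\<dots> \<le> ennreal (exp (- (C * s\<^sup>2)) * exp (C * s\<^sup>2))"
    using mgf by (intro ennreal_leI mult_left_mono) auto
  also have "\<dots> = 1" by (simp add: exp_add[symmetric])
  finally show ?thesis .
qed

lemma (in prob_space) nn_integral_exp_martingale_transform_le_1:
  fixes V :: "nat \<Rightarrow> 'a \<Rightarrow> real" and w :: "nat \<Rightarrow> nat \<Rightarrow> real"
  assumes indep: "indep_vars (\<lambda>_. borel) V {1..}"
    and ident: "\<And>k. k \<ge> 1 \<Longrightarrow> distr M borel (V k) = distr M borel (V 1)"
    and subg: "subgaussian M (V 1) C"
  shows "(\<integral>\<^sup>+ \<omega>. ennreal (exp (l * (\<Sum>k=1..n. (\<Sum>j\<in>{1..<k}. w k j * V j \<omega>) * V k \<omega>)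
            - C * l\<^sup>2 * (\<Sum>k=1..n. (\<Sum>j\<in>{1..<k}. w k j * V j \<omega>)\<^sup>2))) \<partial>M) \<le> 1"
proof -
  have V: "\<And>k. k \<ge> 1 \<Longrightarrow> V k \<in> borel_measurable M"
    using indep unfolding indep_vars_def by auto
  define y where "y = (\<lambda>k (x :: nat \<Rightarrow> real). \<Sum>j\<in>{1..<k}. w k j * x j)"
  define f where "f = (\<lambda>k x v. ennreal (exp (l * y k x * v - C * (l * y k x)\<^sup>2)))"
  have y: "(\<lambda>z. y k (fst z)) \<in> borel_measurable (PiM {1..<k} (\<lambda>_. borel) \<Otimes>\<^sub>M (borel :: real measure))"
    for k unfolding y_def
    by (intro borel_measurable_sum borel_measurable_times borel_measurable_const
        measurable_compose[OF measurable_fst measurable_component_singleton]) auto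
  have f: "(\<lambda>z. f k (fst z) (snd z)) \<in> borel_measurable (PiM {1..<k} (\<lambda>_. borel) \<Otimes>\<^sub>M borel)" for k
    unfolding f_def using y by measurable
  have step: "(\<integral>\<^sup>+ \<omega>. f k x (V k \<omega>) \<partial>M) \<le> 1" if "k \<ge> 1" for k x
  proof -
    have "(\<integral>\<^sup>+ \<omega>. f k x (V k \<omega>) \<partial>M) = (\<integral>\<^sup>+ \<omega>. f k x (V 1 \<omega>) \<partial>M)"
      by (rule nn_integral_comp_eq_of_distr_eq) (use that V ident[OF that] in \<open>auto simp: f_def\<close>)
    also have "\<dots> \<le> 1"
      unfolding f_def by (rule nn_integral_exp_subgaussian_le_1[OF subg])
    finally show ?thesis .
  qed
  have prod_eq: "(\<Prod>k\<in>{1..n}. f k (restrict (\<lambda>i. V i \<omega>) {1..<k}) (V k \<omega>))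
      = ennreal (exp (l * (\<Sum>k=1..n. (\<Sum>j\<in>{1..<k}. w k j * V j \<omega>) * V k \<omega>)
            - C * l\<^sup>2 * (\<Sum>k=1..n. (\<Sum>j\<in>{1..<k}. w k j * V j \<omega>)\<^sup>2)))" for \<omega>
  proof -
    define Y where "Y = (\<lambda>k. \<Sum>j\<in>{1..<k}. w k j * V j \<omega>)"
    have "y k (restrict (\<lambda>i. V i \<omega>) {1..<k}) = Y k" for k
      unfolding y_def Y_def by (intro sum.cong) auto
    then have "(\<Prod>k\<in>{1..n}. f k (restrict (\<lambda>i. V i \<omega>) {1..<k}) (V k \<omega>))
        = ennreal (exp (\<Sum>k=1..n. l * Y k * V k \<omega> - C * (l * Y k)\<^sup>2))"
      unfolding f_def by (simp add: prod_ennreal exp_sum)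
    also have "(\<Sum>k=1..n. l * Y k * V k \<omega> - C * (l * Y k)\<^sup>2)
        = l * (\<Sum>k=1..n. Y k * V k \<omega>) - C * l\<^sup>2 * (\<Sum>k=1..n. (Y k)\<^sup>2)"
      by (simp add: sum_subtractf sum_distrib_left power_mult_distrib mult_ac)
    finally show ?thesis by (simp only: Y_def)
  qed
  have "(\<integral>\<^sup>+ \<omega>. (\<Prod>k\<in>{1..n}. f k (restrict (\<lambda>i. V i \<omega>) {1..<k}) (V k \<omega>)) \<partial>M) \<le> (\<Prod>k\<in>{1..n}. 1)"
    by (rule nn_integral_prod_adapted_le[OF indep f step])
  then show ?thesis by (simp only: prod_eq prod.neutral_const)
qed

lemma (in prob_space) nn_integral_exp_sum_sq_le:
  fixes V :: "nat \<Rightarrow> 'a \<Rightarrow> real"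
  assumes indep: "indep_vars (\<lambda>_. borel) V {1..}"
    and ident: "\<And>k. k \<ge> 1 \<Longrightarrow> distr M borel (V k) = distr M borel (V 1)"
    and exp_sq: "integrable M (\<lambda>\<omega>. exp (t * (V 1 \<omega>)\<^sup>2))"
  shows "(\<integral>\<^sup>+ \<omega>. ennreal (exp (t * (\<Sum>j=1..n. (V j \<omega>)\<^sup>2))) \<partial>M)
           \<le> ennreal (expectation (\<lambda>\<omega>. exp (t * (V 1 \<omega>)\<^sup>2))) ^ n"
proof -
  have V: "\<And>k. k \<ge> 1 \<Longrightarrow> V k \<in> borel_measurable M"
    using indep unfolding indep_vars_def by auto
  define f where "f = (\<lambda>(k::nat) (x::nat \<Rightarrow> real) (v::real). ennreal (exp (t * v\<^sup>2)))"
  have f: "(\<lambda>z. f k (fst z) (snd z)) \<in> borel_measurable (PiM {1..<k} (\<lambda>_. borel) \<Otimes>\<^sub>M borel)" for k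
    unfolding f_def by measurable
  have step: "(\<integral>\<^sup>+ \<omega>. f k x (V k \<omega>) \<partial>M) \<le> ennreal (expectation (\<lambda>\<omega>. exp (t * (V 1 \<omega>)\<^sup>2)))"
    if "k \<ge> 1" for k x
  proof -
    have "(\<integral>\<^sup>+ \<omega>. f k x (V k \<omega>) \<partial>M) = (\<integral>\<^sup>+ \<omega>. f k x (V 1 \<omega>) \<partial>M)"
      by (rule nn_integral_comp_eq_of_distr_eq) (use that V ident[OF that] in \<open>auto simp: f_def\<close>)
    also have "\<dots> = ennreal (expectation (\<lambda>\<omega>. exp (t * (V 1 \<omega>)\<^sup>2)))"
      unfolding f_def using exp_sq by (intro nn_integral_eq_integral) auto
    finally show ?thesis by simp
  qed
  have "(\<integral>\<^sup>+ \<omega>. (\<Prod>k\<in>{1..n}. f k (restrict (\<lambda>i. V i \<omega>) {1..<k}) (V k \<omega>)) \<partial>M)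
      \<le> (\<Prod>k\<in>{1..n}. ennreal (expectation (\<lambda>\<omega>. exp (t * (V 1 \<omega>)\<^sup>2))))"
    by (rule nn_integral_prod_adapted_le[OF indep f step])
  moreover have "(\<Prod>k\<in>{1..n}. f k (restrict (\<lambda>i. V i \<omega>) {1..<k}) (V k \<omega>))
      = ennreal (exp (t * (\<Sum>j=1..n. (V j \<omega>)\<^sup>2)))" for \<omega>
    unfolding f_def by (simp add: prod_ennreal exp_sum sum_distrib_left)
  ultimately show ?thesis by simp
qed

lemma (in prob_space) prob_ge_le_exp_neg_mult:
  fixes g :: "'a \<Rightarrow> real"
  assumes g: "g \<in> borel_measurable M"
    and mgf: "(\<integral>\<^sup>+ \<omega>. ennreal (exp (g \<omega>)) \<partial>M) \<le> ennreal B" and "0 \<le> B"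
  shows "prob {\<omega>\<in>space M. c \<le> g \<omega>} \<le> exp (- c) * B"
proof -
  define S where "S = {\<omega>\<in>space M. c \<le> g \<omega>}"
  have S: "S \<in> sets M" unfolding S_def using g by measurable
  have "ennreal (exp c) * emeasure M S = (\<integral>\<^sup>+ \<omega>. ennreal (exp c) * indicator S \<omega> \<partial>M)"
    by (simp add: nn_integral_cmult_indicator S)
  also have "\<dots> \<le> (\<integral>\<^sup>+ \<omega>. ennreal (exp (g \<omega>)) \<partial>M)"
    by (intro nn_integral_mono) (auto simp: S_def indicator_def ennreal_leI)
  also have "\<dots> \<le> ennreal B" by (rule mgf)
  finally have "ennreal (exp c) * ennreal (prob S) \<le> ennreal B"
    by (simp add: emeasure_eq_measure)
  then have "exp c * prob S \<le> B"
    using \<open>0 \<le> B\<close> by (simp add: ennreal_mult[symmetric])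
  then show ?thesis
    unfolding S_def by (simp add: exp_minus field_simps)
qed

lemma (in prob_space) prob_sum_sq_gt_le_exp:
  fixes V :: "nat \<Rightarrow> 'a \<Rightarrow> real"
  assumes indep: "indep_vars (\<lambda>_. borel) V {1..}"
    and ident: "\<And>k. k \<ge> 1 \<Longrightarrow> distr M borel (V k) = distr M borel (V 1)"
    and t: "t > 0" and exp_sq: "integrable M (\<lambda>\<omega>. exp (t * (V 1 \<omega>)\<^sup>2))"
  shows "\<exists>K>0. \<forall>n. prob {\<omega>\<in>space M. K * real n < (\<Sum>j=1..n. (V j \<omega>)\<^sup>2)} \<le> exp (- real n)"
proof -
  have V: "\<And>k. k \<ge> 1 \<Longrightarrow> V k \<in> borel_measurable M"
    using indep unfolding indep_vars_def by auto
  define m where "m = expectation (\<lambda>\<omega>. exp (t * (V 1 \<omega>)\<^sup>2))"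
  have "expectation (\<lambda>_. 1::real) \<le> m"
    unfolding m_def using t by (intro integral_mono exp_sq) auto
  then have m: "1 \<le> m" by (simp add: prob_space)
  define K where "K = (ln m + 1) / t"
  have "K > 0" using t m by (simp add: K_def add_nonneg_pos)
  moreover have "prob {\<omega>\<in>space M. K * real n < (\<Sum>j=1..n. (V j \<omega>)\<^sup>2)} \<le> exp (- real n)" for n
  proof -
    define R where "R = (\<lambda>\<omega>. t * (\<Sum>j=1..n. (V j \<omega>)\<^sup>2))"
    have R: "R \<in> borel_measurable M"
      unfolding R_def by (intro borel_measurable_times borel_measurable_const borel_measurable_sum borel_measurable_power)
        (auto intro: V)
    have "prob {\<omega>\<in>space M. K * real n < (\<Sum>j=1..n. (V j \<omega>)\<^sup>2)} \<le> prob {\<omega>\<in>space M. t * (K * real n) \<le> R \<omega>}"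
    proof (rule finite_measure_mono)
      show "{\<omega>\<in>space M. t * (K * real n) \<le> R \<omega>} \<in> events" using R by measurable
    qed (use t in \<open>auto simp: R_def\<close>)
    also have "\<dots> \<le> exp (- (t * (K * real n))) * m ^ n"
      using nn_integral_exp_sum_sq_le[OF indep ident exp_sq, of n] m
      by (intro prob_ge_le_exp_neg_mult R) (simp_all add: R_def m_def ennreal_power)
    also have "\<dots> = exp (- real n)"
    proof -
      have "m ^ n = exp (real n * ln m)" using m by (simp add: exp_of_nat_mult)
      moreover have "t * (K * real n) = real n * ln m + real n" using t by (simp add: K_def field_simps)
      ultimately show ?thesis by (simp add: exp_add[symmetric])
    qed
    finally show ?thesis .
  qed
  ultimately show ?thesis by blast
qed

lemma (in prob_space) prob_martingale_transform_deviation_le: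
  fixes V Y :: "nat \<Rightarrow> 'a \<Rightarrow> real" and w :: "nat \<Rightarrow> nat \<Rightarrow> real"
  assumes indep: "indep_vars (\<lambda>_. borel) V {1..}"
    and ident: "\<And>k. k \<ge> 1 \<Longrightarrow> distr M borel (V k) = distr M borel (V 1)"
    and subg: "subgaussian M (V 1) C" and C: "C > 0"
    and Y: "\<And>k \<omega>. Y k \<omega> = (\<Sum>j\<in>{1..<k}. w k j * V j \<omega>)"
    and quad: "\<And>\<omega>. (\<Sum>k=1..n. (Y k \<omega>)\<^sup>2) \<le> B * (\<Sum>j=1..n. (V j \<omega>)\<^sup>2)"
    and B: "B > 0" and K: "K > 0" and \<delta>: "\<delta> > 0" and n: "n > 0"
  shows "prob {\<omega>\<in>space M. \<delta> < \<bar>\<Sum>k=1..n. Y k \<omega> * V k \<omega>\<bar> / real n}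
     \<le> 2 * exp (- (real n * \<delta>\<^sup>2 / (4 * C * B * K)))
        + prob {\<omega>\<in>space M. K * real n < (\<Sum>j=1..n. (V j \<omega>)\<^sup>2)}"
proof -
  have V: "\<And>k. k \<ge> 1 \<Longrightarrow> V k \<in> borel_measurable M"
    using indep unfolding indep_vars_def by auto
  define T where "T = (\<lambda>\<omega>. \<Sum>k=1..n. Y k \<omega> * V k \<omega>)"
  define Q where "Q = (\<lambda>\<omega>. \<Sum>k=1..n. (Y k \<omega>)\<^sup>2)"
  define R where "R = (\<lambda>\<omega>. \<Sum>j=1..n. (V j \<omega>)\<^sup>2)"
  have Y_meas: "Y k \<in> borel_measurable M" for k
    unfolding Y[abs_def] by (intro borel_measurable_sum borel_measurable_times borel_measurable_const)
      (auto intro: V)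
  have [measurable]: "T \<in> borel_measurable M" "Q \<in> borel_measurable M" "R \<in> borel_measurable M"
    unfolding T_def Q_def R_def
    by (intro borel_measurable_sum borel_measurable_times borel_measurable_power Y_meas; auto intro: V)+
  have exp_tail: "prob {\<omega>\<in>space M. x \<le> l * T \<omega> - C * l\<^sup>2 * Q \<omega>} \<le> exp (- x)" for l x
  proof -
    have "prob {\<omega>\<in>space M. x \<le> l * T \<omega> - C * l\<^sup>2 * Q \<omega>} \<le> exp (- x) * 1"
    proof (rule prob_ge_le_exp_neg_mult)
      show "(\<lambda>\<omega>. l * T \<omega> - C * l\<^sup>2 * Q \<omega>) \<in> borel_measurable M" by measurable
      show "(\<integral>\<^sup>+ \<omega>. ennreal (exp (l * T \<omega> - C * l\<^sup>2 * Q \<omega>)) \<partial>M) \<le> ennreal 1"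
        using nn_integral_exp_martingale_transform_le_1[OF indep ident subg, where l=l and n=n and w=w]
        by (simp add: T_def Q_def Y)
    qed simp
    then show ?thesis by simp
  qed
  define D where "D = B * K * real n"
  define l where "l = real n * \<delta> / (2 * C * D)"
  define x where "x = real n * \<delta>\<^sup>2 / (4 * C * B * K)"
  have "D > 0" "l > 0" using B K C n \<delta> by (simp_all add: D_def l_def)
  have x: "x = l * (real n * \<delta>) - C * l\<^sup>2 * D"
    using n C B K unfolding x_def l_def D_def by (simp add: field_simps power2_eq_square)
  let ?E = "\<lambda>l. {\<omega>\<in>space M. x \<le> l * T \<omega> - C * l\<^sup>2 * Q \<omega>}"
  let ?F = "{\<omega>\<in>space M. K * real n < R \<omega>}"
  have "{\<omega>\<in>space M. \<delta> < \<bar>T \<omega>\<bar> / real n} \<subseteq> ?E l \<union> ?E (- l) \<union> ?F"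
  proof (intro subsetI)
    fix \<omega> assume "\<omega> \<in> {\<omega>\<in>space M. \<delta> < \<bar>T \<omega>\<bar> / real n}"
    then have \<omega>: "\<omega> \<in> space M" "\<delta> < \<bar>T \<omega>\<bar> / real n" by auto
    show "\<omega> \<in> ?E l \<union> ?E (- l) \<union> ?F"
    proof (cases "K * real n < R \<omega>")
      case True
      with \<omega>(1) show ?thesis by simp
    next
      case False
    have "B * R \<omega> \<le> B * (K * real n)" using False B by simp
    then have "Q \<omega> \<le> D"
      using quad[of \<omega>] unfolding Q_def R_def D_def by (simp add: mult.assoc)
    then have "C * l\<^sup>2 * Q \<omega> \<le> C * l\<^sup>2 * D" using C by (simp add: mult_left_mono)
    moreover have "real n * \<delta> \<le> T \<omega> \<or> real n * \<delta> \<le> - T \<omega>"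
      using \<omega>(2) n by (auto simp: field_simps abs_if split: if_splits)
    then have "l * (real n * \<delta>) \<le> l * T \<omega> \<or> l * (real n * \<delta>) \<le> l * (- T \<omega>)"
      using \<open>l > 0\<close> by (simp only: mult_le_cancel_left_pos)
    ultimately show ?thesis using \<omega>(1) unfolding x by auto
    qed
  qed
  then have "prob {\<omega>\<in>space M. \<delta> < \<bar>T \<omega>\<bar> / real n} \<le> prob (?E l \<union> ?E (- l) \<union> ?F)"
    by (intro finite_measure_mono) measurable
  also have "\<dots> \<le> prob (?E l) + prob (?E (- l)) + prob ?F"
    by (intro measure_subadditive order_trans[OF measure_subadditive] add_right_mono) measurable
  also have "\<dots> \<le> 2 * exp (- x) + prob ?F"
    using exp_tail[of x l] exp_tail[of x "- l"] by simp
  finally show ?thesis unfolding T_def R_def x_def .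
qed

section \<open>The autoregressive filter\<close>

lemma sum_mult_sq_le_weighted:
  fixes a b :: "nat \<Rightarrow> real"
  shows "(\<Sum>j\<in>A. a j * b j)\<^sup>2 \<le> (\<Sum>j\<in>A. \<bar>a j\<bar>) * (\<Sum>j\<in>A. \<bar>a j\<bar> * (b j)\<^sup>2)"
proof -
  have "(\<Sum>j\<in>A. a j * b j) = (\<Sum>j\<in>A. sqrt \<bar>a j\<bar> * (sgn (a j) * sqrt \<bar>a j\<bar> * b j))"
    by (intro sum.cong refl) (metis mult.assoc mult.left_commute real_sqrt_abs2 real_sqrt_mult sgn_mult_abs abs_mult_self_eq)
  also have "(\<dots>)\<^sup>2 \<le> (\<Sum>j\<in>A. (sqrt \<bar>a j\<bar>)\<^sup>2) * (\<Sum>j\<in>A. (sgn (a j) * sqrt \<bar>a j\<bar> * b j)\<^sup>2)"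
    by (rule Cauchy_Schwarz_ineq_sum)
  also have "\<dots> = (\<Sum>j\<in>A. \<bar>a j\<bar>) * (\<Sum>j\<in>A. \<bar>a j\<bar> * (b j)\<^sup>2)"
    by (intro arg_cong2[where f="(*)"] sum.cong refl)
       (auto simp: power_mult_distrib sgn_if)
  finally show ?thesis .
qed

lemma sum_lower_triangle_swap:
  fixes F :: "nat \<Rightarrow> nat \<Rightarrow> 'a :: comm_monoid_add"
  shows "(\<Sum>k<n. \<Sum>j=1..k. F k j) = (\<Sum>j=1..n. \<Sum>k\<in>{j..<n}. F k j)"
proof -
  have "(\<Sum>k<n. \<Sum>j=1..k. F k j) = (\<Sum>k\<in>{..<n}. \<Sum>j\<in>{j\<in>{1..n}. j \<le> k}. F k j)"
    by (intro sum.cong) auto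
  also have "\<dots> = (\<Sum>j\<in>{1..n}. \<Sum>k\<in>{k\<in>{..<n}. j \<le> k}. F k j)"
    by (rule sum.swap_restrict) auto
  also have "\<dots> = (\<Sum>j=1..n. \<Sum>k\<in>{j..<n}. F k j)"
    by (intro sum.cong) auto
  finally show ?thesis .
qed

lemma sum_sq_convolution_le:
  fixes d v :: "nat \<Rightarrow> real"
  assumes d: "(\<Sum>m<n. \<bar>d m\<bar>) \<le> S"
  shows "(\<Sum>k<n. (\<Sum>j=1..k. d (k - j) * v j)\<^sup>2) \<le> S\<^sup>2 * (\<Sum>j=1..n. (v j)\<^sup>2)"
proof -
  have "0 \<le> S" using d order_trans[OF sum_nonneg] by (metis abs_ge_zero)
  have row: "(\<Sum>j=1..k. \<bar>d (k - j)\<bar>) \<le> S" if "k < n" for k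
  proof -
    have "(\<Sum>j=1..k. \<bar>d (k - j)\<bar>) = (\<Sum>m<k. \<bar>d m\<bar>)"
      by (rule sum.reindex_bij_witness[where i="\<lambda>m. k - m" and j="\<lambda>j. k - j"]) auto
    also have "\<dots> \<le> (\<Sum>m<n. \<bar>d m\<bar>)" using that by (intro sum_mono2) auto
    finally show ?thesis using d by linarith
  qed
  have column: "(\<Sum>k\<in>{j..<n}. \<bar>d (k - j)\<bar>) \<le> S" for j
  proof -
    have "(\<Sum>k\<in>{j..<n}. \<bar>d (k - j)\<bar>) = (\<Sum>m<n - j. \<bar>d m\<bar>)"
      by (rule sum.reindex_bij_witness[where i="\<lambda>m. m + j" and j="\<lambda>k. k - j"]) auto
    also have "\<dots> \<le> (\<Sum>m<n. \<bar>d m\<bar>)" by (intro sum_mono2) auto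
    finally show ?thesis using d by linarith
  qed
  have "(\<Sum>k<n. (\<Sum>j=1..k. d (k - j) * v j)\<^sup>2) \<le> (\<Sum>k<n. S * (\<Sum>j=1..k. \<bar>d (k - j)\<bar> * (v j)\<^sup>2))"
    using sum_mult_sq_le_weighted row
    by (intro sum_mono order_trans[OF sum_mult_sq_le_weighted] mult_right_mono sum_nonneg) auto
  also have "\<dots> = S * (\<Sum>j=1..n. \<Sum>k\<in>{j..<n}. \<bar>d (k - j)\<bar> * (v j)\<^sup>2)"
    by (simp only: sum_distrib_left[symmetric] sum_lower_triangle_swap)
  also have "\<dots> \<le> S * (\<Sum>j=1..n. S * (v j)\<^sup>2)"
    using column \<open>0 \<le> S\<close>
    by (intro mult_left_mono sum_mono) (simp_all add: sum_distrib_right[symmetric] mult_right_mono)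
  also have "\<dots> = S\<^sup>2 * (\<Sum>j=1..n. (v j)\<^sup>2)"
    by (simp add: sum_distrib_left power2_eq_square mult.assoc)
  finally show ?thesis .
qed

definition impulse_response :: "real \<Rightarrow> real \<Rightarrow> nat \<Rightarrow> real" where
  "impulse_response \<theta> \<rho> m = (\<Sum>i\<le>m. \<theta>^i * \<rho>^(m - i))"

lemma impulse_response_0 [simp]: "impulse_response \<theta> \<rho> 0 = 1"
  by (simp add: impulse_response_def)

lemma impulse_response_Suc:
  "impulse_response \<theta> \<rho> (Suc m) = \<theta> * impulse_response \<theta> \<rho> m + \<rho>^(Suc m)"
  unfolding impulse_response_def sum.atMost_Suc_shift
  by (simp add: sum_distrib_left mult.assoc)

lemma eps_proc_eq_sum: "eps_proc \<rho> V k \<omega> = (\<Sum>j=1..k. \<rho>^(k - j) * V j \<omega>)"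
proof (induction k)
  case 0
  then show ?case by simp
next
  case (Suc k)
  have "(\<Sum>j=1..k. \<rho>^(Suc k - j) * V j \<omega>) = \<rho> * (\<Sum>j=1..k. \<rho>^(k - j) * V j \<omega>)"
    unfolding sum_distrib_left by (intro sum.cong refl) (simp add: Suc_diff_le mult.assoc)
  then show ?case using Suc by (simp add: sum.cl_ivl_Suc)
qed

lemma X_proc_eq_sum: "X_proc \<theta> \<rho> V k \<omega> = (\<Sum>j=1..k. impulse_response \<theta> \<rho> (k - j) * V j \<omega>)"
proof (induction k)
  case 0
  then show ?case by simp
next
  case (Suc k)
  have "(\<Sum>j=1..k. impulse_response \<theta> \<rho> (Suc k - j) * V j \<omega>)
      = \<theta> * (\<Sum>j=1..k. impulse_response \<theta> \<rho> (k - j) * V j \<omega>) + (\<Sum>j=1..k. \<rho>^(Suc k - j) * V j \<omega>)"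
    unfolding sum_distrib_left sum.distrib[symmetric]
    by (intro sum.cong refl) (simp add: Suc_diff_le impulse_response_Suc algebra_simps)
  then show ?case using Suc by (simp add: sum.cl_ivl_Suc eps_proc_eq_sum)
qed

lemma X_proc_zero: "X_proc 0 \<rho> V k \<omega> = eps_proc \<rho> V k \<omega>"
  by (cases k) simp_all

lemma U_mart_eq_M_mart_zero: "U_mart \<rho> V n \<omega> = M_mart 0 \<rho> V n \<omega>"
  by (simp add: U_mart_def M_mart_def X_proc_zero)

lemma N_mart_eq_sum: "N_mart \<theta> \<rho> V n \<omega> = (\<Sum>k=1..n. X_proc \<theta> \<rho> V (k - 2) \<omega> * V k \<omega>)"
proof (cases n)
  case (Suc m)
  then have "{1..n} = insert 1 {2..n}" by auto
  then show ?thesis by (simp add: N_mart_def)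
qed (simp add: N_mart_def)

lemma X_proc_diff_eq_sum:
  assumes "1 \<le> i"
  shows "X_proc \<theta> \<rho> V (k - i) \<omega>
           = (\<Sum>j\<in>{1..<k}. (if j \<le> k - i then impulse_response \<theta> \<rho> (k - i - j) else 0) * V j \<omega>)"
proof -
  let ?h = "\<lambda>j. impulse_response \<theta> \<rho> (k - i - j) * V j \<omega>"
  have "(\<Sum>j\<in>{1..<k}. (if j \<le> k - i then impulse_response \<theta> \<rho> (k - i - j) else 0) * V j \<omega>)
      = (\<Sum>j\<in>{1..<k}. if j \<le> k - i then ?h j else 0)"
    by (intro sum.cong) auto
  also have "\<dots> = (\<Sum>j\<in>{j\<in>{1..<k}. j \<le> k - i}. ?h j)"
    by (rule sum.inter_filter[symmetric]) simp
  also have "{j\<in>{1..<k}. j \<le> k - i} = {1..k - i}" using assms by auto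
  finally show ?thesis by (simp add: X_proc_eq_sum)
qed

lemma abs_impulse_response_le:
  assumes "\<bar>\<theta>\<bar> \<le> q" "\<bar>\<rho>\<bar> \<le> q"
  shows "\<bar>impulse_response \<theta> \<rho> m\<bar> \<le> (real m + 1) * q^m"
proof -
  have "\<bar>impulse_response \<theta> \<rho> m\<bar> \<le> (\<Sum>i\<le>m. \<bar>\<theta>^i * \<rho>^(m - i)\<bar>)"
    unfolding impulse_response_def by (rule sum_abs)
  also have "\<dots> \<le> (\<Sum>i\<le>m. q^i * q^(m - i))"
    unfolding abs_mult power_abs using assms
    by (intro sum_mono mult_mono power_mono) auto
  also have "\<dots> = (real m + 1) * q^m" by (simp add: power_add[symmetric])
  finally show ?thesis .
qed

lemma sum_Suc_mult_power_le:
  fixes q :: real assumes "0 \<le> q" "q < 1"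
  shows "(\<Sum>m<n. (real m + 1) * q^m) \<le> 1 / (1 - q)\<^sup>2"
proof -
  have closed_form: "(\<Sum>m<n. (real m + 1) * q^m) * (1 - q)\<^sup>2 = 1 - q^n * (1 + real n * (1 - q))"
    by (induction n) (simp_all add: power2_eq_square algebra_simps)
  have "0 \<le> q^n * (1 + real n * (1 - q))" using assms by simp
  then show ?thesis using assms closed_form by (simp add: field_simps)
qed

lemma sum_abs_impulse_response_le:
  assumes "0 < r" "\<bar>\<theta>\<bar> \<le> 1 - r" "\<bar>\<rho>\<bar> \<le> 1 - r"
  shows "(\<Sum>m<n. \<bar>impulse_response \<theta> \<rho> m\<bar>) \<le> 1 / r\<^sup>2"
  using order_trans[OF sum_mono[OF abs_impulse_response_le[OF assms(2,3)]]
      sum_Suc_mult_power_le[of "1 - r"]] assms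
  by simp

lemma sum_sq_X_proc_le:
  assumes "0 < r" "\<bar>\<theta>\<bar> \<le> 1 - r" "\<bar>\<rho>\<bar> \<le> 1 - r"
  shows "(\<Sum>k<n. (X_proc \<theta> \<rho> V k \<omega>)\<^sup>2) \<le> (\<Sum>j=1..n. (V j \<omega>)\<^sup>2) / r^4"
  using sum_sq_convolution_le[OF sum_abs_impulse_response_le[OF assms], where v="\<lambda>j. V j \<omega>"]
  by (simp add: X_proc_eq_sum power_divide field_simps flip: power_mult)

lemma sum_diff_le_sum_lessThan:
  fixes f :: "nat \<Rightarrow> real"
  assumes "f 0 = 0" "\<And>m. 0 \<le> f m" "1 \<le> i"
  shows "(\<Sum>k=1..n. f (k - i)) \<le> (\<Sum>m<n. f m)"
proof -
  have "(\<Sum>k=1..n. f (k - i)) = (\<Sum>k\<in>{i<..n}. f (k - i))"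
    using assms(1,3) by (intro sum.mono_neutral_right) auto
  also have "\<dots> = (\<Sum>m\<in>(\<lambda>k. k - i) ` {i<..n}. f m)"
  proof (subst sum.reindex)
    show "inj_on (\<lambda>k. k - i) {i<..n}" by (rule inj_onI) auto
  qed simp
  also have "\<dots> \<le> (\<Sum>m<n. f m)"
    using assms by (intro sum_mono2) auto
  finally show ?thesis .
qed

lemma sum_sq_X_proc_diff_le:
  assumes "0 < r" "\<bar>\<theta>\<bar> \<le> 1 - r" "\<bar>\<rho>\<bar> \<le> 1 - r" "1 \<le> i"
  shows "(\<Sum>k=1..n. (X_proc \<theta> \<rho> V (k - i) \<omega>)\<^sup>2) \<le> (\<Sum>j=1..n. (V j \<omega>)\<^sup>2) / r^4"
  by (rule order_trans[OF sum_diff_le_sum_lessThan sum_sq_X_proc_le[OF assms(1-3)]])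
     (use assms(4) in simp_all)

section \<open>Asymptotics\<close>

lemma ext_ln_div_tendsto_MInfty:
  fixes p s a :: "nat \<Rightarrow> real" and A :: real
  assumes a: "filterlim a at_top sequentially"
    and s: "filterlim (\<lambda>n. s n / (a n)\<^sup>2) at_top sequentially"
    and A: "A > 0" and p: "eventually (\<lambda>n. p n \<le> A * exp (- s n)) sequentially"
  shows "((\<lambda>n. ext_ln (p n) / ereal ((a n)\<^sup>2)) \<longlongrightarrow> -\<infinity>) sequentially"
  unfolding tendsto_MInfty
proof
  fix r :: real
  have "eventually (\<lambda>n. 1 \<le> a n) sequentially" using a by (simp add: filterlim_at_top)
  moreover have "eventually (\<lambda>n. \<bar>ln A\<bar> - r + 1 \<le> s n / (a n)\<^sup>2) sequentially"
    using s by (simp add: filterlim_at_top)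
  ultimately show "eventually (\<lambda>n. ext_ln (p n) / ereal ((a n)\<^sup>2) < ereal r) sequentially"
    using p
  proof eventually_elim
    case (elim n)
    have a: "1 \<le> (a n)\<^sup>2" using elim(1) by (simp add: one_le_power)
    show ?case
    proof (cases "p n \<le> 0")
      case True
      then show ?thesis using a by (simp add: ext_ln_def)
    next
      case False
      then have "ln (p n) \<le> ln (A * exp (- s n))" using elim(3) by simp
      then have "ln (p n) / (a n)\<^sup>2 \<le> ln A / (a n)\<^sup>2 - s n / (a n)\<^sup>2"
        using A a by (simp add: ln_mult divide_right_mono flip: diff_divide_distrib)
      moreover have "ln A / (a n)\<^sup>2 \<le> \<bar>ln A\<bar>"
      proof -
        have "ln A \<le> \<bar>ln A\<bar> * 1" by simp
        also have "\<dots> \<le> \<bar>ln A\<bar> * (a n)\<^sup>2" using a by (intro mult_left_mono) auto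
        finally show ?thesis using a by (simp add: divide_le_eq)
      qed
      ultimately have "ln (p n) / (a n)\<^sup>2 < r" using elim(2) by linarith
      then show ?thesis using False elim(1) by (simp add: ext_ln_def)
    qed
  qed
qed

lemma (in prob_space) ext_ln_prob_deviation_tendsto_MInfty:
  fixes V :: "nat \<Rightarrow> 'a \<Rightarrow> real" and Y :: "nat \<Rightarrow> nat \<Rightarrow> 'a \<Rightarrow> real"
    and w :: "nat \<Rightarrow> nat \<Rightarrow> nat \<Rightarrow> real" and a r :: "nat \<Rightarrow> real"
  assumes indep: "indep_vars (\<lambda>_. borel) V {1..}"
    and ident: "\<And>k. k \<ge> 1 \<Longrightarrow> distr M borel (V k) = distr M borel (V 1)"
    and subg: "subgaussian M (V 1) C" and C: "C > 0"
    and K: "K > 0" and sum_sq: "\<And>n. prob {\<omega>\<in>space M. K * real n < (\<Sum>j=1..n. (V j \<omega>)\<^sup>2)} \<le> exp (- real n)"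
    and Y: "\<And>n k \<omega>. Y n k \<omega> = (\<Sum>j\<in>{1..<k}. w n k j * V j \<omega>)"
    and quad: "eventually (\<lambda>n. 0 < r n \<and> r n \<le> 1 \<and>
                 (\<forall>\<omega>. (\<Sum>k=1..n. (Y n k \<omega>)\<^sup>2) \<le> (\<Sum>j=1..n. (V j \<omega>)\<^sup>2) / (r n)^4)) sequentially"
    and \<delta>: "\<delta> > 0" and a: "filterlim a at_top sequentially"
    and rate: "filterlim (\<lambda>n. real n * (r n)^4 / (a n)\<^sup>2) at_top sequentially"
  shows "((\<lambda>n. ext_ln (prob {\<omega>\<in>space M. \<bar>\<Sum>k=1..n. Y n k \<omega> * V k \<omega>\<bar> / real n > \<delta>})
            / ereal ((a n)\<^sup>2)) \<longlongrightarrow> -\<infinity>) sequentially"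
proof -
  define c0 where "c0 = \<delta>\<^sup>2 / (4 * C * K)"
  define c where "c = min c0 1"
  have "c0 > 0" using \<delta> C K by (simp add: c0_def)
  then have c: "0 < c" "c \<le> c0" "c \<le> 1" by (auto simp: c_def)
  have "eventually (\<lambda>n. prob {\<omega>\<in>space M. \<bar>\<Sum>k=1..n. Y n k \<omega> * V k \<omega>\<bar> / real n > \<delta>}
      \<le> 3 * exp (- (c * (real n * (r n)^4)))) sequentially"
    using quad eventually_gt_at_top[of 0]
  proof eventually_elim
    case (elim n)
    then have r: "0 < r n" "r n \<le> 1"
      and bound: "\<And>\<omega>. (\<Sum>k=1..n. (Y n k \<omega>)\<^sup>2) \<le> 1 / (r n)^4 * (\<Sum>j=1..n. (V j \<omega>)\<^sup>2)"
      by auto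
    have "real n * \<delta>\<^sup>2 / (4 * C * (1 / (r n)^4) * K) = c0 * (real n * (r n)^4)"
      using r C K by (simp add: c0_def field_simps)
    then have "prob {\<omega>\<in>space M. \<bar>\<Sum>k=1..n. Y n k \<omega> * V k \<omega>\<bar> / real n > \<delta>}
        \<le> 2 * exp (- (c0 * (real n * (r n)^4))) + exp (- real n)"
      using prob_martingale_transform_deviation_le[OF indep ident subg C Y bound _ K \<delta> elim(2)] r
        sum_sq[of n]
      by simp
    moreover have "c * (real n * (r n)^4) \<le> c0 * (real n * (r n)^4)"
      using c r by (intro mult_right_mono) auto
    then have "exp (- (c0 * (real n * (r n)^4))) \<le> exp (- (c * (real n * (r n)^4)))" by simp
    moreover have "c * (real n * (r n)^4) \<le> 1 * real n"
    proof (rule mult_mono)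
      show "real n * (r n)^4 \<le> real n"
        using r by (simp add: mult_left_le power_le_one)
    qed (use c in auto)
    then have "exp (- real n) \<le> exp (- (c * (real n * (r n)^4)))" by simp
    ultimately show ?case by linarith
  qed
  moreover have "filterlim (\<lambda>n. c * (real n * (r n)^4) / (a n)\<^sup>2) at_top sequentially"
    using filterlim_tendsto_pos_mult_at_top[OF tendsto_const c(1) rate] by (simp add: mult.assoc)
  ultimately show ?thesis
    by (intro ext_ln_div_tendsto_MInfty[OF a, where A=3]) auto
qed

lemma abs_one_plus_div_le:
  fixes \<gamma> g \<kappa> :: real
  assumes "0 < g" "g \<le> - \<gamma>" "- \<gamma> \<le> \<kappa>"
  shows "\<bar>1 + \<gamma> / \<kappa>\<bar> \<le> 1 - g / \<kappa>"
proof -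
  have "\<kappa> > 0" using assms by linarith
  then have "\<gamma> / \<kappa> \<le> - g / \<kappa>" "-1 \<le> \<gamma> / \<kappa>" "g / \<kappa> \<le> 1"
    using assms by (simp_all add: divide_right_mono field_simps)
  then show ?thesis by (simp add: abs_le_iff)
qed

lemma eventually_abs_one_plus_div_le:
  fixes \<kappa> :: "nat \<Rightarrow> real"
  assumes \<kappa>: "filterlim \<kappa> at_top sequentially" and "0 < g" "g \<le> - \<gamma>"
  shows "eventually (\<lambda>n. \<bar>1 + \<gamma> / \<kappa> n\<bar> \<le> 1 - g / \<kappa> n) sequentially"
proof -
  have "eventually (\<lambda>n. - \<gamma> \<le> \<kappa> n) sequentially" using \<kappa> by (simp add: filterlim_at_top)
  then show ?thesis by eventually_elim (rule abs_one_plus_div_le[OF assms(2,3)])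
qed

lemma filterlim_rate_power_mono_at_top:
  fixes a \<kappa> :: "nat \<Rightarrow> real"
  assumes rate: "filterlim (\<lambda>n. real n / ((a n)\<^sup>2 * (\<kappa> n)^p)) at_top sequentially" and "4 \<le> p"
    and \<kappa>: "filterlim \<kappa> at_top sequentially" and a: "\<And>n. 0 < a n" and g: "0 < g"
  shows "filterlim (\<lambda>n. real n * (g / \<kappa> n)^4 / (a n)\<^sup>2) at_top sequentially"
proof (rule filterlim_at_top_mono)
  show "filterlim (\<lambda>n. g^4 * (real n / ((a n)\<^sup>2 * (\<kappa> n)^p))) at_top sequentially"
    using g by (intro filterlim_tendsto_pos_mult_at_top[OF tendsto_const _ rate]) simp
  have "eventually (\<lambda>n. 1 \<le> \<kappa> n) sequentially" using \<kappa> by (simp add: filterlim_at_top)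
  then show "eventually (\<lambda>n. g^4 * (real n / ((a n)\<^sup>2 * (\<kappa> n)^p)) \<le> real n * (g / \<kappa> n)^4 / (a n)\<^sup>2)
      sequentially"
  proof eventually_elim
    case (elim n)
    have "(a n)\<^sup>2 * (\<kappa> n)^4 \<le> (a n)\<^sup>2 * (\<kappa> n)^p"
      using elim \<open>4 \<le> p\<close> by (intro mult_left_mono power_increasing) auto
    then have "real n / ((a n)\<^sup>2 * (\<kappa> n)^p) \<le> real n / ((a n)\<^sup>2 * (\<kappa> n)^4)"
      using elim a[of n] by (intro divide_left_mono) auto
    then have "g^4 * (real n / ((a n)\<^sup>2 * (\<kappa> n)^p)) \<le> g^4 * (real n / ((a n)\<^sup>2 * (\<kappa> n)^4))"
      by (rule mult_left_mono) simp
    also have "\<dots> = real n * (g / \<kappa> n)^4 / (a n)\<^sup>2"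
      by (simp add: power_divide mult_ac)
    finally show ?case .
  qed
qed

lemma (in prob_space) ext_ln_prob_ar_deviation_tendsto_MInfty:
  fixes V :: "nat \<Rightarrow> 'a \<Rightarrow> real" and \<phi> \<rho> r a :: "nat \<Rightarrow> real"
  assumes indep: "indep_vars (\<lambda>_. borel) V {1..}"
    and ident: "\<And>k. k \<ge> 1 \<Longrightarrow> distr M borel (V k) = distr M borel (V 1)"
    and subg: "subgaussian M (V 1) C" and C: "C > 0"
    and K: "K > 0" and sum_sq: "\<And>n. prob {\<omega>\<in>space M. K * real n < (\<Sum>j=1..n. (V j \<omega>)\<^sup>2)} \<le> exp (- real n)"
    and i: "1 \<le> i"
    and gap: "eventually (\<lambda>n. 0 < r n \<and> \<bar>\<phi> n\<bar> \<le> 1 - r n \<and> \<bar>\<rho> n\<bar> \<le> 1 - r n) sequentially"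
    and \<delta>: "\<delta> > 0" and a: "filterlim a at_top sequentially"
    and rate: "filterlim (\<lambda>n. real n * (r n)^4 / (a n)\<^sup>2) at_top sequentially"
  shows "((\<lambda>n. ext_ln (prob {\<omega>\<in>space M.
              \<bar>\<Sum>k=1..n. X_proc (\<phi> n) (\<rho> n) V (k - i) \<omega> * V k \<omega>\<bar> / real n > \<delta>})
            / ereal ((a n)\<^sup>2)) \<longlongrightarrow> -\<infinity>) sequentially"
proof (rule ext_ln_prob_deviation_tendsto_MInfty[OF indep ident subg C K sum_sq _ _ \<delta> a rate])
  show "X_proc (\<phi> n) (\<rho> n) V (k - i) \<omega> = (\<Sum>j\<in>{1..<k}.
      (if j \<le> k - i then impulse_response (\<phi> n) (\<rho> n) (k - i - j) else 0) * V j \<omega>)" for n k \<omega>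
    by (rule X_proc_diff_eq_sum[OF i])
  show "eventually (\<lambda>n. 0 < r n \<and> r n \<le> 1 \<and> (\<forall>\<omega>.
      (\<Sum>k=1..n. (X_proc (\<phi> n) (\<rho> n) V (k - i) \<omega>)\<^sup>2) \<le> (\<Sum>j=1..n. (V j \<omega>)\<^sup>2) / (r n)^4))
      sequentially"
    using gap
  proof eventually_elim
    case (elim n)
    moreover have "r n \<le> 1" using elim abs_ge_zero[of "\<rho> n"] by linarith
    ultimately show ?case by (blast intro: sum_sq_X_proc_diff_le[OF _ _ _ i])
  qed
qed

theorem lemma3p2:
  fixes M :: "'a measure" and V :: "nat \<Rightarrow> 'a \<Rightarrow> real"
    and \<sigma> t0 \<gamma>1 \<gamma>2 \<delta> :: real and \<kappa> a \<theta> \<rho> :: "nat \<Rightarrow> real"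
  assumes P: "prob_space M"
    and meas: "\<And>k. k \<ge> 1 \<Longrightarrow> V k \<in> borel_measurable M"
    and indep: "prob_space.indep_vars M (\<lambda>_. borel) V {1..}"
    and ident: "\<And>k. k \<ge> 1 \<Longrightarrow> distr M borel (V k) = distr M borel (V 1)"
    and int1: "integrable M (V 1)"
    and mean0: "prob_space.expectation M (V 1) = 0"
    and int2: "integrable M (\<lambda>\<omega>. (V 1 \<omega>)\<^sup>2)"
    and var: "prob_space.expectation M (\<lambda>\<omega>. (V 1 \<omega>)\<^sup>2) = \<sigma>\<^sup>2"
    and \<sigma>pos: "\<sigma> > 0"
    and t0: "t0 > 0" and expmom: "integrable M (\<lambda>\<omega>. exp (t0 * (V 1 \<omega>)\<^sup>2))"
    and \<kappa>pos: "\<And>n. \<kappa> n > 0" and \<kappa>lim: "filterlim \<kappa> at_top sequentially"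
    and \<gamma>1: "\<gamma>1 < 0" and \<gamma>2: "\<gamma>2 < 0"
    and \<theta>def: "\<And>n. \<theta> n = 1 + \<gamma>1 / \<kappa> n"
    and cases:
      "((\<forall>n. \<rho> n = 1 + \<gamma>2 / \<kappa> n)
         \<and> incseq a \<and> (\<forall>n. a n > 0) \<and> filterlim a at_top sequentially
         \<and> filterlim (\<lambda>n. real n / ((a n)^6 * (\<kappa> n)^2)) at_top sequentially
         \<and> filterlim (\<lambda>n. real n / ((a n)^2 * (\<kappa> n)^5)) at_top sequentially
         \<and> filterlim (\<lambda>n. real n * (a n)^2 / ((\<kappa> n)^5 * (ln (real n))^2)) at_top sequentially
         \<and> ((\<lambda>n. ext_ln (real n * prob_space.prob M {\<omega>\<in>space M. \<bar>V 1 \<omega>\<bar>^4 > a n * sqrt (real n)})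
                 / ereal ((a n)^2)) \<longlonglongrightarrow> -\<infinity>))
       \<or>
       ((\<forall>n. \<rho> n = -1 - \<gamma>2 / \<kappa> n)
         \<and> incseq a \<and> (\<forall>n. a n > 0) \<and> filterlim a at_top sequentially
         \<and> filterlim (\<lambda>n. real n / ((a n)^6 * (\<kappa> n)^6)) at_top sequentially
         \<and> filterlim (\<lambda>n. real n / ((a n)^2 * (\<kappa> n)^11)) at_top sequentially
         \<and> filterlim (\<lambda>n. real n * (a n)^2 / ((\<kappa> n)^7 * (ln (real n))^2)) at_top sequentially
         \<and> ((\<lambda>n. ext_ln (real n * prob_space.prob M {\<omega>\<in>space M. \<bar>V 1 \<omega>\<bar>^4 > a n * sqrt (real n)})
                 / ereal ((a n)^2)) \<longlonglongrightarrow> -\<infinity>))"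
    and \<delta>: "\<delta> > 0"
  shows "((\<lambda>n. ext_ln (prob_space.prob M {\<omega>\<in>space M. \<bar>M_mart (\<theta> n) (\<rho> n) V n \<omega>\<bar> / real n > \<delta>})
             / ereal ((a n)^2)) \<longlonglongrightarrow> -\<infinity>)
       \<and> ((\<lambda>n. ext_ln (prob_space.prob M {\<omega>\<in>space M. \<bar>N_mart (\<theta> n) (\<rho> n) V n \<omega>\<bar> / real n > \<delta>})
             / ereal ((a n)^2)) \<longlonglongrightarrow> -\<infinity>)
       \<and> ((\<lambda>n. ext_ln (prob_space.prob M {\<omega>\<in>space M. \<bar>U_mart (\<rho> n) V n \<omega>\<bar> / real n > \<delta>})
             / ereal ((a n)^2)) \<longlonglongrightarrow> -\<infinity>)"
proof -
  interpret prob_space M by (rule P)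
  obtain C where C: "C > 0" and subg: "subgaussian M (V 1) C"
    using subgaussian_of_integrable_exp_sq[OF int1 mean0 t0 expmom] by blast
  obtain K where K: "K > 0"
    and sum_sq: "\<And>n. prob {\<omega>\<in>space M. K * real n < (\<Sum>j=1..n. (V j \<omega>)\<^sup>2)} \<le> exp (- real n)"
    using prob_sum_sq_gt_le_exp[OF indep ident t0 expmom] by blast
  define g where "g = min (- \<gamma>1) (- \<gamma>2)"
  have g: "0 < g" "g \<le> - \<gamma>1" "g \<le> - \<gamma>2" using \<gamma>1 \<gamma>2 by (auto simp: g_def)
  have a: "\<And>n. 0 < a n" "filterlim a at_top sequentially"
    and \<rho>: "\<And>n. \<bar>\<rho> n\<bar> = \<bar>1 + \<gamma>2 / \<kappa> n\<bar>"
    using cases by (auto simp: abs_minus_commute)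
  have "(4::nat) \<le> 5" "(4::nat) \<le> 11" by simp_all
  with cases obtain p where "4 \<le> p" "filterlim (\<lambda>n. real n / ((a n)\<^sup>2 * (\<kappa> n)^p)) at_top sequentially"
    by blast
  then have rate: "filterlim (\<lambda>n. real n * (g / \<kappa> n)^4 / (a n)\<^sup>2) at_top sequentially"
    using filterlim_rate_power_mono_at_top[OF _ _ \<kappa>lim, where a=a and g=g] a(1) g(1) by blast
  have gap: "eventually (\<lambda>n. 0 < g / \<kappa> n \<and> \<bar>\<theta> n\<bar> \<le> 1 - g / \<kappa> n \<and> \<bar>\<rho> n\<bar> \<le> 1 - g / \<kappa> n)
      sequentially"
    using eventually_abs_one_plus_div_le[OF \<kappa>lim g(1,2)] eventually_abs_one_plus_div_le[OF \<kappa>lim g(1,3)]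
    by eventually_elim (use g \<kappa>pos in \<open>auto simp: \<theta>def \<rho>\<close>)
  then have gap0: "eventually (\<lambda>n. 0 < g / \<kappa> n \<and> \<bar>0::real\<bar> \<le> 1 - g / \<kappa> n
      \<and> \<bar>\<rho> n\<bar> \<le> 1 - g / \<kappa> n) sequentially"
    by eventually_elim auto
  show ?thesis
    unfolding U_mart_eq_M_mart_zero M_mart_def N_mart_eq_sum
    by (intro conjI ext_ln_prob_ar_deviation_tendsto_MInfty[OF indep ident subg C K sum_sq _ _ \<delta> a(2) rate]
        gap gap0) simp_all
qed

end
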